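(* Let $b\ge2$ be an integer. (1) For any subset $S$ of $\mathbb{Z}$ with $|S|\ge n$ (allowing $n=+\infty$) and any $S$-test sequence $\mathbf{s}=(s_i)_{i=0}^n$, one has for $1\le m<n$ $$\sum_{k=1}^m\alpha_k(S,b,\mathbf{s})\ \ge\ \sum_{k=1}^m\alpha_k(S,b).$$ (2) Given a fixed $N\ge1$, if the $S$-test sequence $(s_i)_{i=0}^N$ is the initial part of a $b$-ordering of $S$, then equality holds in the inequality of (1) for $1\le m\le N$.
   Context: For an integer $b\ge2$ and $a\in\mathbb{Z}$, $\operatorname{ord}_b(a)$ is the largest $k\in\mathbb{N}$ with $b^k\mid a$, and $\operatorname{ord}_b(0)=+\infty$. For nonempty $S\subseteq\mathbb{Z}$, an $S$-test sequence is any (finite or infinite) sequence $\mathbf{s}=(s_i)$ of elements of $S$, repetitions allowed; its $b$-exponent values are $\alpha_k(S,b,\mathbf{s}):=\sum_{j=0}^{k-1}\operatorname{ord}_b(s_k-s_j)$. A $b$-ordering of $S$ is an infinite $S$-test sequence $(a_i)_{i\ge0}$ such that for every $i\ge1$, $a_i$ attains $\min_{a'\in S}\sum_{j=0}^{i-1}\operatorname{ord}_b(a'-a_j)$. The $b$-exponent sequence of $S$ is $\alpha_k(S,b):=\alpha_k(S,b,\mathbf{a})$ for any $b$-ordering $\mathbf{a}$ of $S$; this does not depend on the choice of $b$-ordering. *)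

theory Defs
  imports Main "HOL-Library.Extended_Nat"
begin

definition ordb :: "int \<Rightarrow> int \<Rightarrow> enat" where
  "ordb b a = (if a = 0 then \<infinity> else enat (GREATEST k. b ^ k dvd a))"

definition bsum :: "int \<Rightarrow> (nat \<Rightarrow> int) \<Rightarrow> nat \<Rightarrow> int \<Rightarrow> enat" where
  "bsum b s i x = (\<Sum>j<i. ordb b (x - s j))"

definition alpha_seq :: "int \<Rightarrow> (nat \<Rightarrow> int) \<Rightarrow> nat \<Rightarrow> enat" where
  "alpha_seq b s k = bsum b s k (s k)"

definition b_ordering :: "int set \<Rightarrow> int \<Rightarrow> (nat \<Rightarrow> int) \<Rightarrow> bool" where
  "b_ordering S b a \<longleftrightarrow> (\<forall>i. a i \<in> S) \<and>
     (\<forall>i\<ge>1. \<forall>x\<in>S. bsum b a i (a i) \<le> bsum b a i x)"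

definition alpha_set :: "int set \<Rightarrow> int \<Rightarrow> nat \<Rightarrow> enat" where
  "alpha_set S b k = alpha_seq b (SOME a. b_ordering S b a) k"

definition ecard :: "'a set \<Rightarrow> enat" where
  "ecard S = (if finite S then enat (card S) else \<infinity>)"

end

theory Submission
  imports Defs
begin

text \<open>
  For an injective test sequence, \<open>\<alpha>\<^sub>1 + \<dots> + \<alpha>\<^sub>m\<close> is the sum of \<open>ord\<^sub>b(x - z)\<close> over
  the unordered pairs of its first \<open>m + 1\<close> values; a repetition makes it infinite.
  By induction on \<open>m\<close>, the first \<open>m + 1\<close> terms of a \<open>b\<close>-ordering minimize this pair sum
  among all \<open>(m + 1)\<close>-element subsets \<open>X\<close> of \<open>S\<close>. Let \<open>Y\<close> be the first \<open>m\<close> terms.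
  Descending through residue classes modulo \<open>b, b\<^sup>2, \<dots>\<close> that contain more points of \<open>X\<close>
  than of \<open>Y\<close> gives \<open>y \<in> X - Y\<close> all of whose classes have this property; counting level
  by level, the valuations of \<open>y - z\<close> sum to no more over \<open>z \<in> Y\<close> than over \<open>z \<in> X - {y}\<close>,
  and the greedy choice of the next term does at least as well as \<open>y\<close>.
  As every \<open>b\<close>-ordering is minimal, all of them have the same partial sums, which gives (2).
\<close>

lemma ordb_eq_infinity_iff: "ordb b a = \<infinity> \<longleftrightarrow> a = 0"
  by (simp add: ordb_def)

lemma ordb_diff_commute: "ordb b (x - y) = ordb b (y - x)"
  unfolding ordb_def by (simp add: dvd_diff_commute)

lemma int_less_power:
  fixes b :: int
  assumes "b \<ge> 2"
  shows "int k < b ^ k"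
proof -
  have "int k < 2 ^ k" by (metis less_exp of_nat_less_iff of_nat_numeral of_nat_power)
  also have "\<dots> \<le> b ^ k" using assms by (simp add: power_mono)
  finally show ?thesis .
qed

lemma enat_le_ordb_iff:
  fixes b a :: int
  assumes "b \<ge> 2"
  shows "enat e \<le> ordb b a \<longleftrightarrow> b ^ e dvd a"
proof (cases "a = 0")
  case False
  let ?G = "GREATEST k. b ^ k dvd a"
  have bounded: "k < nat \<bar>a\<bar>" if "b ^ k dvd a" for k
    using int_less_power[OF assms, of k] dvd_imp_le_int[OF False that] assms by simp
  have G: "b ^ ?G dvd a" by (rule GreatestI_nat[of _ 0]) (use bounded in \<open>auto intro: less_imp_le\<close>)
  have "e \<le> ?G \<longleftrightarrow> b ^ e dvd a"
  proof
    assume "e \<le> ?G"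
    then show "b ^ e dvd a" using G by (meson dvd_trans le_imp_power_dvd)
  qed (use bounded in \<open>auto intro: Greatest_le_nat less_imp_le\<close>)
  then show ?thesis using False by (simp add: ordb_def)
qed (simp add: ordb_def)

lemma ex_power_separating:
  fixes b :: int
  assumes "b \<ge> 2" "finite U"
  obtains M where "\<And>u v. u \<in> U \<Longrightarrow> v \<in> U \<Longrightarrow> b ^ M dvd (u - v) \<Longrightarrow> u = v"
proof
  define K where "K = (\<Sum>u\<in>U. \<bar>u\<bar>)"
  have bound: "\<bar>u\<bar> \<le> K" if "u \<in> U" for u
    unfolding K_def using assms(2) that by (intro member_le_sum) auto
  have big: "2 * K < b ^ nat (2 * K)"
    using int_less_power[OF assms(1), of "nat (2 * K)"] by linarith
  show "u = v" if "u \<in> U" "v \<in> U" "b ^ nat (2 * K) dvd (u - v)" for u v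
  proof (rule ccontr)
    assume "u \<noteq> v"
    then have "\<bar>b ^ nat (2 * K)\<bar> \<le> \<bar>u - v\<bar>" using dvd_imp_le_int that(3) by simp
    moreover have "\<bar>u - v\<bar> \<le> 2 * K" using bound[OF that(1)] bound[OF that(2)] by linarith
    ultimately show False using big by linarith
  qed
qed

lemma card_eq_sum_card_fibres:
  assumes "finite A" "finite T" "g ` A \<subseteq> T"
  shows "card A = (\<Sum>t\<in>T. card {x\<in>A. g x = t})"
  using sum.group[OF assms, of "\<lambda>_. 1 :: nat"] by simp

lemma card_less_imp_fibre_card_less:
  assumes "finite A" "finite B" "card A < card B"
  shows "\<exists>x\<in>B. card {y\<in>A. g y = g x} < card {y\<in>B. g y = g x}"
proof (rule ccontr)
  assume "\<not> ?thesis"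
  then have le: "card {y\<in>B. g y = t} \<le> card {y\<in>A. g y = t}" if "t \<in> g ` B" for t
    using that by (auto simp: not_less)
  have "card B = (\<Sum>t\<in>g ` B. card {y\<in>B. g y = t})"
    using assms(2) by (intro card_eq_sum_card_fibres) auto
  also have "\<dots> \<le> (\<Sum>t\<in>g ` B. card {y\<in>A. g y = t})"
    using le by (rule sum_mono)
  also have "\<dots> \<le> (\<Sum>t\<in>g ` (A \<union> B). card {y\<in>A. g y = t})"
    using assms(1,2) by (intro sum_mono2) auto
  also have "\<dots> = card A"
    using assms(1,2) by (intro card_eq_sum_card_fibres[symmetric]) auto
  finally show False using assms(3) by simp
qed

lemma sum_enat_eq_infinity_iff:
  fixes f :: "'a \<Rightarrow> enat"
  assumes "finite A"
  shows "sum f A = \<infinity> \<longleftrightarrow> (\<exists>x\<in>A. f x = \<infinity>)"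
  using assms by (induction A rule: finite_induct) (auto simp: plus_eq_infty_iff_enat)

lemma sum_eq_sum_card_superlevel:
  fixes h :: "'a \<Rightarrow> nat"
  assumes "finite U" "\<And>u. u \<in> U \<Longrightarrow> h u \<le> M"
  shows "sum h U = (\<Sum>e=1..M. card {u\<in>U. e \<le> h u})"
proof -
  have "card {e\<in>{1..M}. e \<le> h u} = h u" if "u \<in> U" for u
  proof -
    have "{e\<in>{1..M}. e \<le> h u} = {1..h u}" using assms(2)[OF that] by auto
    then show ?thesis by simp
  qed
  then show ?thesis using sum_multicount_gen[of "{1..M}" U "\<lambda>e u. e \<le> h u" h] assms(1) by simp
qed

lemma sum_enat_le_if_superlevel_card_le:
  fixes f g :: "'a \<Rightarrow> enat"
  assumes "finite U" "finite V"
    and card_le: "\<And>e. card {v\<in>V. enat e \<le> g v} \<le> card {u\<in>U. enat e \<le> f u}"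
  shows "sum g V \<le> sum f U"
proof (cases "\<exists>u\<in>U. f u = \<infinity>")
  case True
  then show ?thesis using sum_enat_eq_infinity_iff[OF assms(1), of f] by simp
next
  case False
  define f' where "f' u = the_enat (f u)" for u
  define g' where "g' v = the_enat (g v)" for v
  define M where "M = sum f' U"
  have f: "f u = enat (f' u)" "f' u \<le> M" if "u \<in> U" for u
    using False that assms(1) by (auto simp: f'_def M_def intro: member_le_sum)
  then have "{u\<in>U. enat (Suc M) \<le> f u} = {}" by fastforce
  then have "card {v\<in>V. enat (Suc M) \<le> g v} = 0" using card_le[of "Suc M"] by (metis card.empty le_zero_eq)
  then have "g v < enat (Suc M)" if "v \<in> V" for v using that assms(2) by (auto simp: not_le)
  then have g: "g v = enat (g' v)" "g' v \<le> M" if "v \<in> V" for v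
    using that by (cases "g v"; force simp: g'_def)+
  have "sum g' V = (\<Sum>e=1..M. card {v\<in>V. e \<le> g' v})"
    using g(2) by (intro sum_eq_sum_card_superlevel[OF assms(2)])
  also have "\<dots> \<le> (\<Sum>e=1..M. card {u\<in>U. e \<le> f' u})"
  proof (rule sum_mono)
    fix e
    have "{v\<in>V. e \<le> g' v} = {v\<in>V. enat e \<le> g v}" "{u\<in>U. e \<le> f' u} = {u\<in>U. enat e \<le> f u}"
      using f g by auto
    then show "card {v\<in>V. e \<le> g' v} \<le> card {u\<in>U. e \<le> f' u}" using card_le by simp
  qed
  also have "\<dots> = sum f' U" using f(2) by (intro sum_eq_sum_card_superlevel[OF assms(1), symmetric])
  finally have "enat (sum g' V) \<le> enat (sum f' U)" by simp
  moreover have "sum g V = enat (sum g' V)" "sum f U = enat (sum f' U)"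
    using f g by (simp_all add: of_nat_eq_enat[symmetric] of_nat_sum)
  ultimately show ?thesis by simp
qed

lemma mod_power_eq_mono:
  fixes b x y :: int
  assumes "e' \<le> e" "x mod b ^ e = y mod b ^ e"
  shows "x mod b ^ e' = y mod b ^ e'"
  by (metis assms le_imp_power_dvd mod_mod_cancel)

lemma heavy_residue_class_refines:
  fixes b r :: int and X Y :: "int set"
  assumes "finite X" "finite Y"
    and "card {y\<in>Y. y mod b ^ e = r} < card {x\<in>X. x mod b ^ e = r}"
  shows "\<exists>x\<in>X. x mod b ^ e = r \<and>
    card {y\<in>Y. y mod b ^ Suc e = x mod b ^ Suc e} < card {y\<in>X. y mod b ^ Suc e = x mod b ^ Suc e}"
proof -
  let ?g = "\<lambda>z. z mod b ^ Suc e"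
  obtain x where x: "x \<in> {x\<in>X. x mod b ^ e = r}" and
    less: "card {y\<in>{y\<in>Y. y mod b ^ e = r}. ?g y = ?g x} < card {y\<in>{y\<in>X. y mod b ^ e = r}. ?g y = ?g x}"
    using card_less_imp_fibre_card_less[where g = ?g, OF _ _ assms(3)] assms(1,2) by auto
  have "y mod b ^ e = r" if "?g y = ?g x" for y
    using mod_power_eq_mono[where e' = e and e = "Suc e", OF _ that] x by simp
  then have "{y\<in>{y\<in>Z. y mod b ^ e = r}. ?g y = ?g x} = {y\<in>Z. ?g y = ?g x}" for Z
    by blast
  then show ?thesis using x less by auto
qed

text \<open>Modulo \<open>b\<^sup>M\<close> the points of \<open>X \<union> Y\<close> lie in distinct classes, so the descent through
  heavy classes stops at level \<open>M\<close> in a point of \<open>X - Y\<close>.\<close>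

lemma heavy_residue_class_descends:
  fixes b r :: int and X Y :: "int set"
  assumes "finite X" "finite Y"
    and sep: "\<And>u v. u \<in> X \<union> Y \<Longrightarrow> v \<in> X \<union> Y \<Longrightarrow> b ^ M dvd (u - v) \<Longrightarrow> u = v"
    and "card {y\<in>Y. y mod b ^ l = r} < card {x\<in>X. x mod b ^ l = r}"
  shows "\<exists>x\<in>X. x \<notin> Y \<and> x mod b ^ l = r \<and>
    (\<forall>e\<ge>l. card {y\<in>Y. y mod b ^ e = x mod b ^ e} < card {y\<in>X. y mod b ^ e = x mod b ^ e})"
  using assms(4)
proof (induction "M - l" arbitrary: l r)
  case 0
  then have "{x\<in>X. x mod b ^ l = r} \<noteq> {}" by (metis card.empty not_less0)
  then obtain x where x: "x \<in> X" "x mod b ^ l = r" by blast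
  have singleton: "{y\<in>Z. y mod b ^ e = x mod b ^ e} = Z \<inter> {x}" if "Z \<subseteq> X \<union> Y" "l \<le> e" for Z e
  proof -
    have "y = x" if "y \<in> X \<union> Y" "y mod b ^ e = x mod b ^ e" for y
    proof -
      have "M \<le> e" using "0.hyps" \<open>l \<le> e\<close> by simp
      from mod_power_eq_mono[OF this that(2)] have "b ^ M dvd (y - x)" by (simp add: mod_eq_dvd_iff)
      then show "y = x" using sep that(1) x(1) by blast
    qed
    then show ?thesis using \<open>Z \<subseteq> X \<union> Y\<close> by blast
  qed
  have "card (Y \<inter> {x}) < card (X \<inter> {x})"
    using "0.prems" singleton[of Y l] singleton[of X l] x(2) by simp
  then have "x \<notin> Y" using x(1) by (cases "x \<in> Y") auto
  then show ?case using x singleton by auto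
next
  case (Suc d)
  obtain x where x: "x \<in> X" "x mod b ^ l = r" and
    heavy: "card {y\<in>Y. y mod b ^ Suc l = x mod b ^ Suc l} < card {y\<in>X. y mod b ^ Suc l = x mod b ^ Suc l}"
    using heavy_residue_class_refines[OF assms(1,2) Suc.prems] by blast
  have "d = M - Suc l" using Suc.hyps(2) by simp
  from Suc.hyps(1)[OF this heavy] obtain y where y: "y \<in> X" "y \<notin> Y" "y mod b ^ Suc l = x mod b ^ Suc l"
    and heavy_above: "\<forall>e\<ge>Suc l.
      card {z\<in>Y. z mod b ^ e = y mod b ^ e} < card {z\<in>X. z mod b ^ e = y mod b ^ e}"
    by blast
  have "y mod b ^ l = r" using mod_power_eq_mono[OF _ y(3), of l] x(2) by simp
  moreover have "e = l \<or> Suc l \<le> e" if "l \<le> e" for e using that by linarith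
  ultimately show ?case using y heavy_above Suc.prems by blast
qed

lemma ex_point_with_heavier_residue_classes:
  fixes b :: int and X Y :: "int set"
  assumes "b \<ge> 2" "finite X" "finite Y" "card Y < card X"
  shows "\<exists>y\<in>X. y \<notin> Y \<and> (\<forall>e. card {z\<in>Y. b ^ e dvd (y - z)} < card {x\<in>X. b ^ e dvd (y - x)})"
proof -
  obtain M where "\<And>u v. u \<in> X \<union> Y \<Longrightarrow> v \<in> X \<union> Y \<Longrightarrow> b ^ M dvd (u - v) \<Longrightarrow> u = v"
    using ex_power_separating[OF assms(1), of "X \<union> Y"] assms(2,3) by blast
  moreover have "card {y\<in>Y. y mod b ^ 0 = 0} < card {x\<in>X. x mod b ^ 0 = 0}" using assms(4) by simp
  ultimately obtain y where "y \<in> X" "y \<notin> Y"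
    "\<forall>e. card {z\<in>Y. z mod b ^ e = y mod b ^ e} < card {z\<in>X. z mod b ^ e = y mod b ^ e}"
    using heavy_residue_class_descends[OF assms(2,3), where b = b and M = M and l = 0 and r = 0] by blast
  moreover have "{z\<in>Z. z mod b ^ e = y mod b ^ e} = {z\<in>Z. b ^ e dvd (y - z)}" for Z e
    by (simp add: mod_eq_dvd_iff dvd_diff_commute)
  ultimately show ?thesis by auto
qed

lemma exchange_ordb_sum_le:
  fixes b :: int and X Y :: "int set"
  assumes "b \<ge> 2" "finite X" "finite Y" "card Y < card X"
  shows "\<exists>y\<in>X. y \<notin> Y \<and> (\<Sum>z\<in>Y. ordb b (y - z)) \<le> (\<Sum>z\<in>X - {y}. ordb b (y - z))"
proof -
  obtain y where y: "y \<in> X" "y \<notin> Y"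
    and heavier: "\<And>e. card {z\<in>Y. b ^ e dvd (y - z)} < card {x\<in>X. b ^ e dvd (y - x)}"
    using ex_point_with_heavier_residue_classes[OF assms] by blast
  have "(\<Sum>z\<in>Y. ordb b (y - z)) \<le> (\<Sum>z\<in>X - {y}. ordb b (y - z))"
  proof (rule sum_enat_le_if_superlevel_card_le)
    fix e
    have "card {z\<in>X - {y}. enat e \<le> ordb b (y - z)} = card ({x\<in>X. b ^ e dvd (y - x)} - {y})"
      using enat_le_ordb_iff[OF assms(1)] by (intro arg_cong[where f = card]) auto
    also have "\<dots> = card {x\<in>X. b ^ e dvd (y - x)} - 1"
      using y(1) assms(2) by (simp add: card_Diff_singleton)
    finally show "card {z\<in>Y. enat e \<le> ordb b (y - z)} \<le> card {z\<in>X - {y}. enat e \<le> ordb b (y - z)}"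
      using heavier[of e] enat_le_ordb_iff[OF assms(1)] by simp
  qed (use assms in auto)
  then show ?thesis using y by blast
qed

definition pair_ord_sum :: "int \<Rightarrow> int set \<Rightarrow> enat" where
  "pair_ord_sum b X = (\<Sum>x\<in>X. \<Sum>z\<in>{z\<in>X. z < x}. ordb b (x - z))"

lemma pair_ord_sum_insert:
  assumes "finite X" "x \<notin> X"
  shows "pair_ord_sum b (insert x X) = pair_ord_sum b X + (\<Sum>z\<in>X. ordb b (x - z))"
proof -
  have below: "(\<Sum>z\<in>{z\<in>insert x X. z < u}. ordb b (u - z)) =
      (\<Sum>z\<in>{z\<in>X. z < u}. ordb b (u - z)) + (if x < u then ordb b (x - u) else 0)" if "u \<in> X" for u
  proof (cases "x < u")
    case True
    then have "{z\<in>insert x X. z < u} = insert x {z\<in>X. z < u}" by auto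
    then show ?thesis using True assms by (simp add: add.commute ordb_diff_commute)
  qed (auto intro: sum.cong)
  have above: "(\<Sum>u\<in>X. \<Sum>z\<in>{z\<in>insert x X. z < u}. ordb b (u - z)) =
      pair_ord_sum b X + (\<Sum>u\<in>X. if x < u then ordb b (x - u) else 0)"
    unfolding pair_ord_sum_def sum.distrib[symmetric]
    by (rule sum.cong[OF refl below])
  have split: "X = {z\<in>X. z < x} \<union> {z\<in>X. x < z}"
    using assms(2) by (auto simp: not_less order_le_less)
  have "{z\<in>insert x X. z < x} = {z\<in>X. z < x}" by auto
  then have "pair_ord_sum b (insert x X) = (\<Sum>z\<in>{z\<in>X. z < x}. ordb b (x - z)) +
      (\<Sum>u\<in>X. \<Sum>z\<in>{z\<in>insert x X. z < u}. ordb b (u - z))"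
    unfolding pair_ord_sum_def sum.insert[OF assms] by (rule arg_cong)
  also have "\<dots> = pair_ord_sum b X + (\<Sum>z\<in>X. ordb b (x - z))"
    unfolding above sum.inter_filter[OF assms(1), symmetric] using assms(1)
    by (subst (3) split) (simp add: sum.union_disjoint disjoint_iff ac_simps)
  finally show ?thesis .
qed

lemma bsum_eq_sum_image:
  assumes "inj_on s {..<k}"
  shows "bsum b s k x = (\<Sum>z\<in>s ` {..<k}. ordb b (x - z))"
  unfolding bsum_def using sum.reindex[OF assms, of "\<lambda>z. ordb b (x - z)"] by simp

lemma alpha_sum_atLeast1_eq_atMost: "(\<Sum>k=1..m. alpha_seq b s k) = (\<Sum>k\<le>m. alpha_seq b s k)"
proof -
  have "(\<Sum>k\<le>m. alpha_seq b s k) = alpha_seq b s 0 + (\<Sum>k=1..m. alpha_seq b s k)"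
    by (simp add: atMost_atLeast0 sum.atLeast_Suc_atMost)
  then show ?thesis by (simp add: alpha_seq_def bsum_def)
qed

lemma alpha_sum_eq_pair_ord_sum:
  "inj_on s {..m} \<Longrightarrow> (\<Sum>k\<le>m. alpha_seq b s k) = pair_ord_sum b (s ` {..m})"
proof (induction m)
  case 0
  then show ?case by (simp add: alpha_seq_def bsum_def pair_ord_sum_def)
next
  case (Suc m)
  have inj: "inj_on s {..m}" using Suc.prems by (rule inj_on_subset) auto
  have new: "s (Suc m) \<notin> s ` {..m}" using Suc.prems by (fastforce simp: inj_on_def)
  have "alpha_seq b s (Suc m) = (\<Sum>z\<in>s ` {..m}. ordb b (s (Suc m) - z))"
    unfolding alpha_seq_def using bsum_eq_sum_image inj by (simp add: lessThan_Suc_atMost)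
  then show ?case
    using Suc.IH[OF inj] pair_ord_sum_insert[OF _ new] by (simp add: atMost_Suc)
qed

lemma alpha_seq_repeat_eq_infinity:
  assumes "j < k" "s j = s k"
  shows "alpha_seq b s k = \<infinity>"
  unfolding alpha_seq_def bsum_def using assms
  by (subst sum_enat_eq_infinity_iff) (auto simp: ordb_eq_infinity_iff intro!: bexI[of _ j])

lemma alpha_sum_eq_infinity_if_not_inj:
  assumes "\<not> inj_on s {..m}"
  shows "(\<Sum>k\<le>m. alpha_seq b s k) = \<infinity>"
proof -
  obtain j k where "j < k" "k \<le> m" "s j = s k"
    using assms unfolding inj_on_def by (metis atMost_iff linorder_neqE_nat)
  then show ?thesis using alpha_seq_repeat_eq_infinity[of j k s b]
    by (subst sum_enat_eq_infinity_iff) auto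
qed

lemma b_ordering_repeat_imp_exhausted:
  assumes "b_ordering S b a" "j < k" "a j = a k"
  shows "S \<subseteq> a ` {..<k}"
proof
  fix x assume "x \<in> S"
  then have "bsum b a k (a k) \<le> bsum b a k x" using assms unfolding b_ordering_def by auto
  then have "bsum b a k x = \<infinity>"
    using alpha_seq_repeat_eq_infinity[OF assms(2,3)] unfolding alpha_seq_def by simp
  then obtain i where "i < k" "x = a i"
    unfolding bsum_def by (subst (asm) sum_enat_eq_infinity_iff) (auto simp: ordb_eq_infinity_iff)
  then show "x \<in> a ` {..<k}" by blast
qed

lemma ex_minimizer:
  fixes f :: "'a \<Rightarrow> 'b::wellorder"
  assumes "S \<noteq> {}"
  shows "\<exists>x\<in>S. \<forall>y\<in>S. f x \<le> f y"
proof -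
  have "(LEAST v. v \<in> f ` S) \<in> f ` S" using assms by (auto intro: LeastI)
  then obtain x where "x \<in> S" "f x = (LEAST v. v \<in> f ` S)" by auto
  then show ?thesis by (metis Least_le image_eqI)
qed

definition greedy_step :: "int set \<Rightarrow> int \<Rightarrow> (nat \<Rightarrow> int) \<Rightarrow> nat \<Rightarrow> int" where
  "greedy_step S b s i = (SOME x. x \<in> S \<and> (\<forall>y\<in>S. bsum b s i x \<le> bsum b s i y))"

text \<open>Only the values below \<open>i\<close> enter \<open>bsum b s i\<close>; cutting the argument off there makes
  the recursion well-founded.\<close>

function greedy_ordering :: "int set \<Rightarrow> int \<Rightarrow> nat \<Rightarrow> int" where
  "greedy_ordering S b i = greedy_step S b (\<lambda>j. if j < i then greedy_ordering S b j else 0) i"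
  by auto
termination by (relation "measure (\<lambda>(S, b, i). i)") auto

lemma bsum_cong: "(\<And>j. j < i \<Longrightarrow> s j = t j) \<Longrightarrow> bsum b s i x = bsum b t i x"
  unfolding bsum_def by simp

lemma b_ordering_greedy_ordering:
  assumes "S \<noteq> {}"
  shows "b_ordering S b (greedy_ordering S b)"
proof -
  have "greedy_ordering S b i \<in> S \<and>
      (\<forall>y\<in>S. bsum b (greedy_ordering S b) i (greedy_ordering S b i) \<le> bsum b (greedy_ordering S b) i y)" for i
  proof -
    let ?s = "\<lambda>j. if j < i then greedy_ordering S b j else 0"
    have "bsum b ?s i = bsum b (greedy_ordering S b) i"
      by (intro ext bsum_cong) simp
    moreover have "greedy_step S b ?s i \<in> S \<and>
        (\<forall>y\<in>S. bsum b ?s i (greedy_step S b ?s i) \<le> bsum b ?s i y)"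
      unfolding greedy_step_def by (rule someI_ex) (use ex_minimizer[OF assms] in blast)
    ultimately show ?thesis by simp
  qed
  then show ?thesis unfolding b_ordering_def by blast
qed

lemma b_ordering_prefix_minimizes_pair_ord_sum:
  assumes b: "b \<ge> 2" and a: "b_ordering S b a"
  shows "inj_on a {..<k} \<Longrightarrow> X \<subseteq> S \<Longrightarrow> finite X \<Longrightarrow> card X = k \<Longrightarrow>
    pair_ord_sum b (a ` {..<k}) \<le> pair_ord_sum b X"
proof (induction k arbitrary: X)
  case 0
  then show ?case by (simp add: pair_ord_sum_def)
next
  case (Suc k)
  define Y where "Y = a ` {..<k}"
  have inj: "inj_on a {..<k}" using Suc.prems(1) by (rule inj_on_subset) auto
  have Y: "finite Y" "card Y = k" "a k \<notin> Y"
    using Suc.prems(1) inj unfolding Y_def by (fastforce simp: card_image inj_on_def)+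
  obtain y where y: "y \<in> X" "y \<notin> Y"
    and nearer: "(\<Sum>z\<in>Y. ordb b (y - z)) \<le> (\<Sum>z\<in>X - {y}. ordb b (y - z))"
    using exchange_ordb_sum_le[OF b Suc.prems(3) Y(1)] Y(2) Suc.prems(4) by auto
  have greedy: "(\<Sum>z\<in>Y. ordb b (a k - z)) \<le> (\<Sum>z\<in>Y. ordb b (y - z))"
  proof (cases "k = 0")
    case False
    then have "bsum b a k (a k) \<le> bsum b a k y"
      using a y(1) Suc.prems(2) unfolding b_ordering_def by auto
    then show ?thesis using bsum_eq_sum_image[OF inj] unfolding Y_def by simp
  qed (simp add: Y_def)
  have "pair_ord_sum b Y \<le> pair_ord_sum b (X - {y})"
    unfolding Y_def using Suc.prems y(1) by (intro Suc.IH[OF inj]) auto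
  then have "pair_ord_sum b Y + (\<Sum>z\<in>Y. ordb b (a k - z)) \<le>
      pair_ord_sum b (X - {y}) + (\<Sum>z\<in>X - {y}. ordb b (y - z))"
    using greedy nearer by (meson add_mono order.trans)
  moreover have "a ` {..<Suc k} = insert (a k) Y" unfolding Y_def by (simp add: lessThan_Suc)
  moreover have "X = insert y (X - {y})" using y(1) by auto
  ultimately show ?case
    using pair_ord_sum_insert[OF Y(1,3)] pair_ord_sum_insert[of "X - {y}" y] Suc.prems(3) by simp
qed

lemma b_ordering_alpha_sum_le:
  assumes b: "b \<ge> 2" and a: "b_ordering S b a" and s: "\<forall>i\<le>m. s i \<in> S"
  shows "(\<Sum>k=1..m. alpha_seq b a k) \<le> (\<Sum>k=1..m. alpha_seq b s k)"
proof (cases "inj_on s {..m}")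
  case False
  then show ?thesis unfolding alpha_sum_atLeast1_eq_atMost alpha_sum_eq_infinity_if_not_inj[OF False] by simp
next
  case True
  define X where "X = s ` {..m}"
  have X: "X \<subseteq> S" "finite X" "card X = Suc m"
    using s True unfolding X_def by (auto simp: card_image)
  have "inj_on a {..m}"
  proof (rule ccontr)
    assume "\<not> inj_on a {..m}"
    then obtain j k where jk: "j < k" "k \<le> m" "a j = a k"
      unfolding inj_on_def by (metis atMost_iff linorder_neqE_nat)
    then have "card X \<le> card (a ` {..<k})"
      using b_ordering_repeat_imp_exhausted[OF a jk(1,3)] X(1) by (intro card_mono) auto
    also have "\<dots> \<le> k" using card_image_le[of "{..<k}" a] by simp
    finally show False using X(3) jk(2) by simp
  qed
  then have "pair_ord_sum b (a ` {..m}) \<le> pair_ord_sum b X"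
    using b_ordering_prefix_minimizes_pair_ord_sum[OF b a, of "Suc m" X] X
    by (simp add: lessThan_Suc_atMost)
  then show ?thesis
    unfolding alpha_sum_atLeast1_eq_atMost alpha_sum_eq_pair_ord_sum[OF True]
      alpha_sum_eq_pair_ord_sum[OF \<open>inj_on a {..m}\<close>] X_def .
qed

lemma alpha_set_sum_eq:
  assumes "b \<ge> 2" "b_ordering S b a"
  shows "(\<Sum>k=1..m. alpha_set S b k) = (\<Sum>k=1..m. alpha_seq b a k)"
proof -
  have some: "b_ordering S b (SOME a. b_ordering S b a)" by (rule someI[of "b_ordering S b", OF assms(2)])
  have "\<forall>i\<le>m. a i \<in> S" "\<forall>i\<le>m. (SOME a. b_ordering S b a) i \<in> S"
    using assms(2) some unfolding b_ordering_def by auto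
  then show ?thesis
    unfolding alpha_set_def using b_ordering_alpha_sum_le[OF assms(1)] assms(2) some
    by (metis antisym)
qed

lemma alpha_seq_cong: "(\<And>i. i \<le> k \<Longrightarrow> s i = t i) \<Longrightarrow> alpha_seq b s k = alpha_seq b t k"
  unfolding alpha_seq_def bsum_def by simp

theorem theorem3p5:
  fixes b :: int
  assumes "b \<ge> 2"
  shows
   "(\<forall>(S::int set) (n::enat) (s::nat \<Rightarrow> int) (m::nat).
       n \<le> ecard S \<longrightarrow> (\<forall>i. enat i \<le> n \<longrightarrow> s i \<in> S) \<longrightarrow>
       1 \<le> m \<longrightarrow> enat m < n \<longrightarrow>
       (\<Sum>k=1..m. alpha_seq b s k) \<ge> (\<Sum>k=1..m. alpha_set S b k))
    \<and>
    (\<forall>(S::int set) (N::nat) (s::nat \<Rightarrow> int).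
       1 \<le> N \<longrightarrow> (\<forall>i\<le>N. s i \<in> S) \<longrightarrow>
       (\<exists>a. b_ordering S b a \<and> (\<forall>i\<le>N. s i = a i)) \<longrightarrow>
       (\<forall>m. 1 \<le> m \<and> m \<le> N \<longrightarrow>
          (\<Sum>k=1..m. alpha_seq b s k) = (\<Sum>k=1..m. alpha_set S b k)))"
proof (intro conjI allI impI)
  fix S :: "int set" and n :: enat and s :: "nat \<Rightarrow> int" and m :: nat
  assume "\<forall>i. enat i \<le> n \<longrightarrow> s i \<in> S" "enat m < n"
  then have s: "\<forall>i\<le>m. s i \<in> S" by (meson enat_ord_simps(1) le_less_trans less_imp_le)
  then have "b_ordering S b (greedy_ordering S b)" by (intro b_ordering_greedy_ordering) auto
  then show "(\<Sum>k=1..m. alpha_seq b s k) \<ge> (\<Sum>k=1..m. alpha_set S b k)"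
    using alpha_set_sum_eq[OF assms] b_ordering_alpha_sum_le[OF assms _ s] by simp
next
  fix S :: "int set" and N :: nat and s :: "nat \<Rightarrow> int" and m :: nat
  assume "\<exists>a. b_ordering S b a \<and> (\<forall>i\<le>N. s i = a i)" "1 \<le> m \<and> m \<le> N"
  then obtain a where a: "b_ordering S b a" and "\<forall>i\<le>m. s i = a i" by auto
  then have "(\<Sum>k=1..m. alpha_seq b s k) = (\<Sum>k=1..m. alpha_seq b a k)"
    by (intro sum.cong refl alpha_seq_cong) auto
  then show "(\<Sum>k=1..m. alpha_seq b s k) = (\<Sum>k=1..m. alpha_set S b k)"
    using alpha_set_sum_eq[OF assms a] by simp
qed

end
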